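(* Let $T=(t_{ij})$ be an $\mathbb{N}$-tableau of shape $\lambda$, let $\widehat{T}=(\widehat{t}_{ij})$ be its image under the toggle map, and let $U_T=(u_{ijk})$ be the array defined in the context. Let $(i,j)$ be a box of $\lambda$ and let $m$ be the unique natural number such that $(i+m,j+m)$ is a border box of $\lambda$. Then $\widehat{t}_{ij}=u_{i+m,j+m,m+1}$.
   Context: Partitions are drawn in English notation with matrix coordinates: the box in row $i$ and column $j$ is $(i,j)$. An $\mathbb{N}$-tableau of shape $\lambda$ is an assignment of a nonnegative integer to each box of $\lambda$. A border box of $\lambda$ is a box $(i,j)$ such that $(i+1,j+1)$ is not a box; a corner box is a box $(i,j)$ such that neither $(i+1,j)$ nor $(i,j+1)$ is a box. The toggle map $T\mapsto\widehat{T}$ is defined recursively: $\widehat{\emptyset}=\emptyset$; if $T'$ is obtained from $T$ by adding a corner box $(i,j)$ (of $\mathrm{sh}(T')$) with entry $x$, then $\widehat{T'}$ is obtained from $\widehat{T}$ as follows. For $k\ge1$ let $\beta_k,\gamma_k,\alpha_k$ be the entries of $\widehat{T}$ at $(i-k,j-k)$, $(i-k+1,j-k)$, $(i-k,j-k+1)$ respectively (taken to be $0$ if the box is not in $\mathrm{sh}(T)$). Then $\widehat{T'}$ agrees with $\widehat{T}$ except that for $1\le k<\min(i,j)$ the entry at $(i-k,j-k)$ becomes $\max(\alpha_{k+1},\gamma_{k+1})+\min(\alpha_k,\gamma_k)-\beta_k$, and the entry at $(i,j)$ is $\max(\alpha_1,\gamma_1)+x$. This is independent of the order in which boxes are added.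 The array $U_T=(u_{ijk})$ is indexed by all $(i,j,k)\in\mathbb{Z}^3$ such that $(i+a,j+b)$ is a box of $\lambda$ for some $a,b\in\{0,1,2\}$ and $0\le k\le\min(i,j)+1$. Its entries are: $u_{i,j,0}=0$ and $u_{i,j,\min(i,j)+1}=0$, and for $0<k<\min(i,j)+1$, \[u_{ijk}=\min(u_{i-1,j,k-1},u_{i,j-1,k-1})+\max(u_{i-1,j,k},u_{i,j-1,k})-u_{i-1,j-1,k-1}+t_{ijk},\] where $t_{ij1}=t_{ij}$ if $(i,j)\in\lambda$ (and $0$ otherwise) and $t_{ijk}=0$ for $k\ne1$. *)

theory Defs
  imports Main
begin

text \<open>Boxes are pairs (i,j) of positive naturals (row i, column j, English notation).
A partition (Young diagram) is a finite set of such boxes closed under moving up/left.\<close>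

definition is_partition :: "(nat \<times> nat) set \<Rightarrow> bool" where
  "is_partition L \<longleftrightarrow> finite L \<and> (\<forall>(i,j)\<in>L. 1 \<le> i \<and> 1 \<le> j) \<and>
     (\<forall>i j i' j'. (i,j) \<in> L \<and> 1 \<le> i' \<and> i' \<le> i \<and> 1 \<le> j' \<and> j' \<le> j \<longrightarrow> (i',j') \<in> L)"

definition border_box :: "(nat \<times> nat) set \<Rightarrow> nat \<Rightarrow> nat \<Rightarrow> bool" where
  "border_box L i j \<longleftrightarrow> (i,j) \<in> L \<and> (i+1, j+1) \<notin> L"

definition corner_box :: "(nat \<times> nat) set \<Rightarrow> nat \<Rightarrow> nat \<Rightarrow> bool" where
  "corner_box L i j \<longleftrightarrow> (i,j) \<in> L \<and> (i+1, j) \<notin> L \<and> (i, j+1) \<notin> L"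

text \<open>An N-tableau of shape L is a function T :: nat => nat => nat; only its values on boxes
of L matter.  Toggle images are functions H :: nat => nat => int which are 0 off the shape.\<close>

text \<open>One step of the toggle map: add the corner box (i,j) with entry x to the current image H.
For 1 <= k < min i j the entry at (a,b) = (i-k,j-k) becomes
max(alpha_(k+1), gamma_(k+1)) + min(alpha_k, gamma_k) - beta_k, where
alpha_(k+1) = H(a-1,b), gamma_(k+1) = H(a,b-1), alpha_k = H(a,b+1), gamma_k = H(a+1,b),
beta_k = H(a,b); and the entry at (i,j) becomes max(H(i-1,j), H(i,j-1)) + x.\<close>

definition toggle_step :: "(nat \<Rightarrow> nat \<Rightarrow> int) \<Rightarrow> nat \<Rightarrow> nat \<Rightarrow> nat \<Rightarrow> (nat \<Rightarrow> nat \<Rightarrow> int)" where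
  "toggle_step H i j x = (\<lambda>a b.
     if a = i \<and> b = j then max (H (i-1) j) (H i (j-1)) + int x
     else if 1 \<le> a \<and> 1 \<le> b \<and> a < i \<and> b < j \<and> i - a = j - b
     then max (H (a-1) b) (H a (b-1)) + min (H a (b+1)) (H (a+1) b) - H a b
     else H a b)"

inductive toggles :: "(nat \<times> nat) set \<Rightarrow> (nat \<Rightarrow> nat \<Rightarrow> nat) \<Rightarrow> (nat \<Rightarrow> nat \<Rightarrow> int) \<Rightarrow> bool" where
  empty: "toggles {} T (\<lambda>_ _. 0)"
| add: "toggles S T H \<Longrightarrow> (i,j) \<notin> S \<Longrightarrow> is_partition (insert (i,j) S) \<Longrightarrow>
        corner_box (insert (i,j) S) i j \<Longrightarrow> toggles (insert (i,j) S) T (toggle_step H i j (T i j))"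

text \<open>Indices with i or j equal to 0 (or negative) only carry boundary values 0;
u i j 0 = 0, u i j k = 0 for k > min i j (in particular k = min i j + 1), and for
0 < k <= min i j the recursion from the paper, with t_{ij1} = t_ij on boxes of L.\<close>

function uarr :: "(nat \<times> nat) set \<Rightarrow> (nat \<Rightarrow> nat \<Rightarrow> nat) \<Rightarrow> nat \<Rightarrow> nat \<Rightarrow> nat \<Rightarrow> int" where
  "uarr L T i j k =
    (if k = 0 \<or> min i j < k then 0
     else min (uarr L T (i-1) j (k-1)) (uarr L T i (j-1) (k-1))
        + max (uarr L T (i-1) j k) (uarr L T i (j-1) k)
        - uarr L T (i-1) (j-1) (k-1)
        + (if k = 1 \<and> (i,j) \<in> L then int (T i j) else 0))"
  by pat_completeness auto
termination by (relation "measure (\<lambda>(L,T,i,j,k). i+j)") auto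

end

theory Submission
  imports Defs
begin

text \<open>Adding the corner (i,j) changes the
toggle image only on the diagonal through (i,j), and (i,j) is the border box of that diagonal.
The neighbours of a diagonal box (i-k,j-k) lie on the diagonals of (i-1,j), (i,j-1) and
(i-1,j-1), which are border boxes of the smaller shape, so by induction their values are
entries of the array u; these entries do not see the new box.  The toggle rule at
(i-k,j-k) is then literally the recursion defining u at (i,j,k+1).\<close>

declare uarr.simps [simp del]

lemma uarr_0 [simp]: "uarr L T i j 0 = 0"
  by (subst uarr.simps) simp

lemma uarr_eq_0_if_gt: "min i j < k \<Longrightarrow> uarr L T i j k = 0"
  by (subst uarr.simps) simp

lemma uarr_Suc:
  assumes "k < min i j"
  shows "uarr L T i j (Suc k) =
    min (uarr L T (i-1) j k) (uarr L T i (j-1) k)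
    + max (uarr L T (i-1) j (Suc k)) (uarr L T i (j-1) (Suc k))
    - uarr L T (i-1) (j-1) k
    + (if k = 0 \<and> (i,j) \<in> L then int (T i j) else 0)"
proof -
  have "\<not> (Suc k = 0 \<or> min i j < Suc k)"
    using assms by (auto simp: min_def)
  then show ?thesis
    by (subst uarr.simps[of L T i j "Suc k"]) (simp only: if_False, simp)
qed

lemma uarr_cong_box:
  assumes "\<And>p q. p \<le> i \<Longrightarrow> q \<le> j \<Longrightarrow> (p,q) \<in> L \<longleftrightarrow> (p,q) \<in> L'"
  shows "uarr L T i j k = uarr L' T i j k"
  using assms
proof (induction L T i j k rule: uarr.induct)
  case (1 L T i j k)
  show ?case
  proof (cases "k = 0 \<or> min i j < k")
    case True
    then show ?thesis by (auto simp: uarr_eq_0_if_gt)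
  next
    case False
    note IH = "1.IH"[OF False]
    have "uarr L T (i-1) j (k-1) = uarr L' T (i-1) j (k-1)"
      by (rule IH(1)) (use "1.prems" in auto)
    moreover have "uarr L T i (j-1) (k-1) = uarr L' T i (j-1) (k-1)"
      by (rule IH(2)) (use "1.prems" in auto)
    moreover have "uarr L T (i-1) j k = uarr L' T (i-1) j k"
      by (rule IH(3)) (use "1.prems" in auto)
    moreover have "uarr L T i (j-1) k = uarr L' T i (j-1) k"
      by (rule IH(4)) (use "1.prems" in auto)
    moreover have "uarr L T (i-1) (j-1) (k-1) = uarr L' T (i-1) (j-1) (k-1)"
      by (rule IH(5)) (use "1.prems" in auto)
    moreover have "(i,j) \<in> L \<longleftrightarrow> (i,j) \<in> L'"
      using "1.prems" by simp
    ultimately show ?thesis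
      by (subst (1 2) uarr.simps) (simp only:)
  qed
qed

lemma partition_box_pos:
  "is_partition L \<Longrightarrow> (p,q) \<in> L \<Longrightarrow> 1 \<le> p \<and> 1 \<le> q"
  unfolding is_partition_def by blast

lemma partition_downward_closed:
  "is_partition L \<Longrightarrow> (p,q) \<in> L \<Longrightarrow> 1 \<le> c \<Longrightarrow> c \<le> p \<Longrightarrow> 1 \<le> d \<Longrightarrow> d \<le> q
    \<Longrightarrow> (c,d) \<in> L"
  unfolding is_partition_def by blast

lemma corner_box_maximal:
  assumes L: "is_partition L" and "corner_box L i j"
    and pq: "(p,q) \<in> L" "i \<le> p" "j \<le> q"
  shows "(p,q) = (i,j)"
proof (rule ccontr)
  assume "(p,q) \<noteq> (i,j)"
  then have "i < p \<or> j < q"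
    using pq by auto
  moreover have "1 \<le> i" "1 \<le> j"
    using partition_box_pos[OF L] \<open>corner_box L i j\<close> by (auto simp: corner_box_def)
  ultimately have "(i+1, j) \<in> L \<or> (i, j+1) \<in> L"
    using partition_downward_closed[OF L pq(1)] pq by auto
  with \<open>corner_box L i j\<close> show False
    by (auto simp: corner_box_def)
qed

lemma corner_box_border_box:
  "is_partition L \<Longrightarrow> corner_box L i j \<Longrightarrow> border_box L i j"
  using corner_box_maximal[of L i j "i+1" "j+1"] by (auto simp: corner_box_def border_box_def)

lemma border_box_diagonal_unique:
  assumes L: "is_partition L"
    and "border_box L (a+m) (b+m)" "border_box L (a+n) (b+n)"
  shows "m = n"
proof -
  have no_border_below: "False"
    if "border_box L (a+m) (b+m)" "border_box L (a+n) (b+n)" "m < n" for m n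
  proof -
    have "(a+n, b+n) \<in> L"
      using that(2) by (simp add: border_box_def)
    then have "(a+m+1, b+m+1) \<in> L"
      using partition_downward_closed[OF L] \<open>m < n\<close> by simp
    with that(1) show False
      by (simp add: border_box_def)
  qed
  show ?thesis
    using no_border_below[of m n] no_border_below[of n m] assms(2,3) by (metis linorder_neqE_nat)
qed

lemma is_partition_remove_corner:
  assumes L: "is_partition L" and ij: "corner_box L i j"
  shows "is_partition (L - {(i,j)})"
  unfolding is_partition_def
proof (intro conjI allI impI)
  show "finite (L - {(i,j)})"
    using L by (simp add: is_partition_def)
  show "\<forall>(p,q) \<in> L - {(i,j)}. 1 \<le> p \<and> 1 \<le> q"
    using partition_box_pos[OF L] by blast
  fix p q c d
  assume "(p,q) \<in> L - {(i,j)} \<and> 1 \<le> c \<and> c \<le> p \<and> 1 \<le> d \<and> d \<le> q"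
  then show "(c,d) \<in> L - {(i,j)}"
    using partition_downward_closed[OF L] corner_box_maximal[OF L ij] by blast
qed

lemma toggles_vanish_on_axes: "toggles S T H \<Longrightarrow> H 0 b = 0 \<and> H a 0 = 0"
proof (induction arbitrary: a b rule: toggles.induct)
  case (empty T)
  then show ?case by simp
next
  case (add S T H i j)
  have "1 \<le> i" "1 \<le> j"
    using partition_box_pos[OF add.hyps(3)] by auto
  with add.IH show ?case
    by (simp add: toggle_step_def)
qed

locale corner_extension =
  fixes S :: "(nat \<times> nat) set" and T :: "nat \<Rightarrow> nat \<Rightarrow> nat" and H :: "nat \<Rightarrow> nat \<Rightarrow> int"
    and i j :: nat
  assumes partition: "is_partition (insert (i,j) S)"
    and new_box: "(i,j) \<notin> S"
    and corner: "corner_box (insert (i,j) S) i j"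
    and H_axes: "H 0 b = 0" "H a 0 = 0"
    and H_eq_uarr: "(a,b) \<in> S \<Longrightarrow> border_box S (a+m) (b+m) \<Longrightarrow> H a b = uarr S T (a+m) (b+m) (m+1)"
begin

abbreviation S' :: "(nat \<times> nat) set" where
  "S' \<equiv> insert (i,j) S"

lemma corner_pos: "1 \<le> i" "1 \<le> j"
  using partition_box_pos[OF partition] by auto

lemma partition_S: "is_partition S"
  using is_partition_remove_corner[OF partition corner] new_box by simp

lemma uarr_insert_corner:
  assumes "(p,q) \<in> S"
  shows "uarr S T p q k = uarr S' T p q k"
proof (rule uarr_cong_box)
  have "\<not> (i \<le> p \<and> j \<le> q)"
    using corner_box_maximal[OF partition corner, of p q] assms new_box by auto
  then show "(p',q') \<in> S \<longleftrightarrow> (p',q') \<in> S'" if "p' \<le> p" "q' \<le> q" for p' q'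
    using that by auto
qed

lemma H_eq_uarr_near_corner:
  assumes pq: "(p,q) \<in> {(i-1,j), (i,j-1), (i-1,j-1)}" and "c + n = p" "d + n = q"
  shows "H c d = uarr S' T p q (Suc n)"
proof (cases "c = 0 \<or> d = 0")
  case True
  then have "min p q < Suc n"
    using assms(2,3) by auto
  with True show ?thesis
    using H_axes by (auto simp: uarr_eq_0_if_gt)
next
  case False
  then have "1 \<le> p" "1 \<le> q" "p \<le> i" "q \<le> j" "(p,q) \<noteq> (i,j)"
    using pq assms(2,3) corner_pos by auto
  then have "(p,q) \<in> S"
    using partition_downward_closed[OF partition, of i j p q] by auto
  moreover have "border_box S p q"
    using calculation pq corner new_box corner_pos by (auto simp: border_box_def corner_box_def)
  moreover have "(c,d) \<in> S"
    using partition_downward_closed[OF partition_S calculation(1)] False assms(2,3) by simp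
  ultimately show ?thesis
    using H_eq_uarr[of c d n] uarr_insert_corner assms(2,3) by simp
qed

lemma toggle_step_off_diagonal:
  assumes ab: "(a,b) \<in> S'" and off: "a + j \<noteq> b + i" and border: "border_box S' (a+m) (b+m)"
  shows "toggle_step H i j (T i j) a b = uarr S' T (a+m) (b+m) (m+1)"
proof -
  have "toggle_step H i j (T i j) a b = H a b"
    using off by (auto simp: toggle_step_def)
  moreover have "(a,b) \<in> S" "(a+m, b+m) \<in> S"
    using ab border off by (auto simp: border_box_def)
  moreover have "border_box S (a+m) (b+m)"
    using border calculation(3) by (simp add: border_box_def)
  ultimately show ?thesis
    using H_eq_uarr uarr_insert_corner by simp
qed

lemma toggle_step_at_corner: "toggle_step H i j (T i j) i j = uarr S' T i j 1"
proof -
  have "uarr S' T i j 1 = max (uarr S' T (i-1) j 1) (uarr S' T i (j-1) 1) + int (T i j)"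
    using uarr_Suc[of 0 i j S' T] corner_pos by simp
  moreover have "H (i-1) j = uarr S' T (i-1) j 1" "H i (j-1) = uarr S' T i (j-1) 1"
    using H_eq_uarr_near_corner[of _ _ _ 0] by auto
  ultimately show ?thesis
    by (simp add: toggle_step_def)
qed

lemma toggle_step_below_corner:
  assumes diag: "a + k = i" "b + k = j" and "0 < k" "1 \<le> a" "1 \<le> b"
  shows "toggle_step H i j (T i j) a b = uarr S' T i j (Suc k)"
proof -
  have "uarr S' T i j (Suc k) =
      min (uarr S' T (i-1) j k) (uarr S' T i (j-1) k)
      + max (uarr S' T (i-1) j (Suc k)) (uarr S' T i (j-1) (Suc k))
      - uarr S' T (i-1) (j-1) k"
    using uarr_Suc[of k i j S' T] assms by simp
  moreover have "H (a-1) b = uarr S' T (i-1) j (Suc k)" "H a (b-1) = uarr S' T i (j-1) (Suc k)"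
    using H_eq_uarr_near_corner[of _ _ _ k] assms by auto
  moreover have "H a (b+1) = uarr S' T (i-1) j k" "H (a+1) b = uarr S' T i (j-1) k"
    "H a b = uarr S' T (i-1) (j-1) k"
    using H_eq_uarr_near_corner[of _ _ _ "k-1"] assms by auto
  moreover have "i - a = j - b"
    using diag by simp
  ultimately show ?thesis
    using assms by (simp add: toggle_step_def)
qed

lemma toggle_step_eq_uarr:
  assumes ab: "(a,b) \<in> S'" and border: "border_box S' (a+m) (b+m)"
  shows "toggle_step H i j (T i j) a b = uarr S' T (a+m) (b+m) (m+1)"
proof (cases "a + j = b + i")
  case False
  then show ?thesis
    using toggle_step_off_diagonal assms by blast
next
  case True
  have "a \<le> i"
    using corner_box_maximal[OF partition corner ab] True new_box ab by fastforce
  define k where "k = i - a"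
  have k: "a + k = i" "b + k = j"
    using \<open>a \<le> i\<close> True unfolding k_def by auto
  then have "m = k"
    using border_box_diagonal_unique[OF partition border] corner_box_border_box[OF partition corner]
    by blast
  moreover have "1 \<le> a" "1 \<le> b"
    using partition_box_pos[OF partition ab] by auto
  ultimately show ?thesis
    using k toggle_step_at_corner toggle_step_below_corner[OF k] by (cases "k = 0") auto
qed

end

theorem toggles_eq_uarr:
  "toggles S T H \<Longrightarrow> (a,b) \<in> S \<Longrightarrow> border_box S (a+m) (b+m)
    \<Longrightarrow> H a b = uarr S T (a+m) (b+m) (m+1)"
proof (induction arbitrary: a b m rule: toggles.induct)
  case (empty T)
  then show ?case by simp
next
  case (add S T H i j)
  interpret corner_extension S T H i j
    using add toggles_vanish_on_axes by unfold_locales blast+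
  show ?case
    using add.prems by (rule toggle_step_eq_uarr)
qed

theorem proposition4p2:
  fixes L :: "(nat \<times> nat) set" and T :: "nat \<Rightarrow> nat \<Rightarrow> nat" and H :: "nat \<Rightarrow> nat \<Rightarrow> int"
    and i j m :: nat
  assumes "is_partition L"
    and "toggles L T H"
    and "(i, j) \<in> L"
    and "border_box L (i + m) (j + m)"
  shows "H i j = uarr L T (i + m) (j + m) (m + 1)"
  using toggles_eq_uarr assms(2-4) .

end
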